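(* Let $K$ and $L$ be $n$-element finite sets, let $U$ be the real $n^2$-dimensional manifold of unitary matrices $(u_{kl})_{k\in K,l\in L}$, and let $U_0\subset U$ be the open subset of unitary matrices all of whose entries are nonzero. Let $B$ be the real affine space of real matrices $(p_{kl})_{k\in K,l\in L}$ with $\sum_{k}p_{kl}=1$ for all $l$ and $\sum_lp_{kl}=1$ for all $k$, and let $\mu:U\to B$, $\mu((u_{kl}))=(|u_{kl}|^2)$. Then for every $u\in U_0$, the (real) dimension of the kernel of the tangent map $\mu_{*u}:T_uU\to T_{\mu(u)}B$ equals the multiplicity of $1$ in the spectrum of the Berezin transform $I_u$.
   Context: For a finite set $J$, $F(J)$ denotes the space of complex-valued functions on $J$; $M=K\times L$. For $u\in U_0$ the Berezin transform $I_u:F(M)\to F(M)$ is the complex linear operator $(I_uf)_{kl}=\sum_{k'\in K,l'\in L}\frac{u_{kl'}u_{k'l}}{u_{kl}u_{k'l'}}f_{k'l'}|u_{k'l'}|^2$ (equivalently $I_u=C_u^{-1}D_u$, where $C_uf$, $D_uf$ are the operators on $F(K)$ with matrices $\sum_l u_{kl}f_{kl}\bar u_{k'l}$ and $\sum_l u_{kl}f_{k'l}\bar u_{k'l}$); $I_u$ is unitary, hence diagonalizable, and the multiplicity of $1$ is the complex dimension of its $1$-eigenspace. *)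

theory Defs
  imports "HOL-Analysis.Analysis"
begin

text \<open>Complex matrices indexed by K x L are modelled as complex ^ 'l ^ 'k
  (K, L finite index types); F(M) is the same space.\<close>

definition unitary_mat :: "complex ^ 'l ^ 'k \<Rightarrow> bool" where
  "unitary_mat u \<longleftrightarrow>
     (\<forall>k k'. (\<Sum>l\<in>UNIV. u$k$l * cnj (u$k'$l)) = (if k = k' then 1 else 0)) \<and>
     (\<forall>l l'. (\<Sum>k\<in>UNIV. cnj (u$k$l) * u$k$l') = (if l = l' then 1 else 0))"

definition U0 :: "(complex ^ 'l ^ 'k) set" where
  "U0 = {u. unitary_mat u \<and> (\<forall>k l. u$k$l \<noteq> 0)}"

text \<open>Tangent space of the unitary group at u: kernel of the differential of
  Z \<mapsto> Z Z^* at u, i.e. X u^* + u X^* = 0.\<close>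
definition tangent_U :: "complex ^ 'l ^ 'k \<Rightarrow> (complex ^ 'l ^ 'k) set" where
  "tangent_U u = {X. \<forall>k k'. (\<Sum>l\<in>UNIV. X$k$l * cnj (u$k'$l) + u$k$l * cnj (X$k'$l)) = 0}"

text \<open>The moment map mu(u) = (|u_kl|^2), viewed in the ambient space of real matrices
  containing the affine space B.\<close>
definition mu :: "complex ^ 'l ^ 'k \<Rightarrow> real ^ 'l ^ 'k" where
  "mu u = (\<chi> k l. (cmod (u$k$l))\<^sup>2)"

definition berezin :: "complex ^ 'l ^ 'k \<Rightarrow> complex ^ 'l ^ 'k \<Rightarrow> complex ^ 'l ^ 'k" where
  "berezin u f = (\<chi> k l. \<Sum>k'\<in>UNIV. \<Sum>l'\<in>UNIV.
      (u$k$l' * u$k'$l) / (u$k$l * u$k'$l') * f$k'$l' * complex_of_real ((cmod (u$k'$l'))\<^sup>2))"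

definition cscale :: "complex \<Rightarrow> complex ^ 'l ^ 'k \<Rightarrow> complex ^ 'l ^ 'k" where
  "cscale c f = (\<chi> k l. c * f$k$l)"

definition cdim :: "(complex ^ 'l ^ 'k) set \<Rightarrow> nat" where
  "cdim S = vector_space.dim cscale S"

text \<open>Multiplicity of the eigenvalue 1 of the (diagonalizable) Berezin transform:
  complex dimension of its 1-eigenspace.\<close>
definition mult_one :: "complex ^ 'l ^ 'k \<Rightarrow> nat" where
  "mult_one u = cdim {f. berezin u f = f}"

end

theory Submission
  imports Defs
begin

text \<open>Both numbers are the real dimension of the space of real matrices f with C_u f = D_u f.
  Since every u_kl is nonzero, X lies in the kernel of the differential of mu iff each X_kl is
  orthogonal to u_kl, i.e. X_kl = i f_kl u_kl with f real; for such X the tangency condition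
  X u^* + u X^* = 0 reads C_u f = D_u f. On the other side, unitarity of u turns I_u f = f into
  C_u f = D_u f; this is a complex subspace closed under entrywise conjugation, so its complex
  dimension equals the real dimension of its real points.\<close>

definition cconj :: "complex ^ 'l ^ 'k \<Rightarrow> complex ^ 'l ^ 'k" where
  "cconj f = (\<chi> k l. cnj (f$k$l))"

text \<open>The matrices of the operators C_u f and D_u f on F(K), so that I_u = C_u^{-1} D_u.\<close>

definition berezin_C :: "complex ^ 'l ^ 'k \<Rightarrow> complex ^ 'l ^ 'k \<Rightarrow> 'k \<Rightarrow> 'k \<Rightarrow> complex" where
  "berezin_C u f k k' = (\<Sum>l\<in>UNIV. u$k$l * f$k$l * cnj (u$k'$l))"

definition berezin_D :: "complex ^ 'l ^ 'k \<Rightarrow> complex ^ 'l ^ 'k \<Rightarrow> 'k \<Rightarrow> 'k \<Rightarrow> complex" where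
  "berezin_D u f k k' = (\<Sum>l\<in>UNIV. u$k$l * f$k'$l * cnj (u$k'$l))"

definition phase_variation :: "complex ^ 'l ^ 'k \<Rightarrow> complex ^ 'l ^ 'k \<Rightarrow> complex ^ 'l ^ 'k" where
  "phase_variation u f = (\<chi> k l. \<i> * f$k$l * u$k$l)"

lemma vector_space_cscale: "vector_space (cscale :: complex \<Rightarrow> complex ^ 'l ^ 'k \<Rightarrow> _)"
  by unfold_locales (simp_all add: cscale_def vec_eq_iff algebra_simps)

lemma scaleR_eq_cscale: "r *\<^sub>R f = cscale (complex_of_real r) f"
  by (simp add: cscale_def vec_eq_iff) (simp add: scaleR_conv_of_real)

lemma real_part_sum_cscale:
  assumes "\<forall>v\<in>B. \<forall>k l. v$k$l \<in> \<real>"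
  shows "(\<chi> k l. complex_of_real (Re ((\<Sum>v\<in>B. cscale (c v) v)$k$l))) = (\<Sum>v\<in>B. Re (c v) *\<^sub>R v)"
proof -
  have entry: "complex_of_real (Re (c v * v$k$l)) = Re (c v) *\<^sub>R v$k$l" if "v \<in> B" for v k l
  proof -
    from assms that have "v$k$l \<in> \<real>" by blast
    then obtain r where "v$k$l = of_real r" by (rule Reals_cases)
    then show ?thesis by (simp add: scaleR_conv_of_real)
  qed
  have "complex_of_real (Re ((\<Sum>v\<in>B. cscale (c v) v)$k$l)) = (\<Sum>v\<in>B. Re (c v) *\<^sub>R v)$k$l" for k l
    unfolding sum_component cscale_def vec_lambda_beta Re_sum of_real_sum vector_scaleR_component
    by (intro sum.cong refl entry)
  then show ?thesis by (simp add: vec_eq_iff)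
qed

lemma cdim_eq_dim_real_points:
  assumes S: "module.subspace cscale S" and conj: "\<And>f. f \<in> S \<Longrightarrow> cconj f \<in> S"
  shows "cdim S = dim {f \<in> S. \<forall>k l. f$k$l \<in> \<real>}"
proof -
  interpret cv: vector_space "cscale :: complex \<Rightarrow> complex ^ 'l ^ 'k \<Rightarrow> _"
    by (rule vector_space_cscale)
  define R where "R = {f \<in> S. \<forall>k l. f$k$l \<in> \<real>}"
  obtain B where B: "B \<subseteq> R" "independent B" "R \<subseteq> span B" "card B = dim R"
    by (rule basis_exists)
  have finB: "finite B" using B(2) by (rule independent_imp_finite)
  have real_B: "\<forall>v\<in>B. \<forall>k l. v$k$l \<in> \<real>" using B(1) by (auto simp: R_def)
  have "cv.dim S = card B"
  proof (rule cv.dim_unique)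
    show "B \<subseteq> S" using B(1) by (auto simp: R_def)
    have "subspace (cv.span B)"
      unfolding subspace_def scaleR_eq_cscale using cv.span_zero cv.span_add cv.span_scale by blast
    then have R_span: "R \<subseteq> cv.span B"
      using B(3) span_minimal[OF cv.span_superset] by blast
    show "S \<subseteq> cv.span B"
    proof
      fix f assume "f \<in> S"
      define re where "re = cscale (1/2) (f + cconj f)"
      define im where "im = cscale (\<i>/2) (cconj f - f)"
      have "re \<in> R" "im \<in> R"
        using \<open>f \<in> S\<close> conj[OF \<open>f \<in> S\<close>] S
        by (simp_all add: R_def re_def im_def cv.subspace_add cv.subspace_diff cv.subspace_scale)
           (simp_all add: cscale_def cconj_def complex_is_Real_iff)
      then have "re + cscale \<i> im \<in> cv.span B"
        using R_span by (intro cv.span_add cv.span_scale) auto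
      moreover have "re + cscale \<i> im = f"
        by (simp add: re_def im_def cscale_def cconj_def vec_eq_iff field_simps)
      ultimately show "f \<in> cv.span B" by simp
    qed
    show "cv.independent B"
    proof
      assume "cv.dependent B"
      then obtain w where w: "\<exists>v\<in>B. w v \<noteq> 0" "(\<Sum>v\<in>B. cscale (w v) v) = 0"
        unfolding cv.dependent_finite[OF finB] by blast
      have "(\<Sum>v\<in>B. cscale (- \<i> * w v) v) = cscale (- \<i>) (\<Sum>v\<in>B. cscale (w v) v)"
        by (simp add: cv.scale_sum_right)
      with w(2) have w': "(\<Sum>v\<in>B. cscale (- \<i> * w v) v) = 0" by simp
      have real_comb: "(\<Sum>v\<in>B. Re (c v) *\<^sub>R v) = 0" if "(\<Sum>v\<in>B. cscale (c v) v) = 0" for c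
        by (simp add: real_part_sum_cscale[OF real_B, symmetric] that vec_eq_iff)
      have "Re (w v) = 0 \<and> Im (w v) = 0" if "v \<in> B" for v
        using independentD[OF B(2) finB order_refl real_comb[OF w(2)] that]
          independentD[OF B(2) finB order_refl real_comb[OF w'] that]
        by simp
      with w(1) show False by (auto simp: complex_eq_iff)
    qed
  qed simp
  then show ?thesis unfolding cdim_def R_def[symmetric] B(4) .
qed

lemma unitary_mat_row_sum:
  assumes "unitary_mat u"
  shows "(\<Sum>l\<in>UNIV. (\<Sum>k\<in>UNIV. a k * u$k$l) * cnj (u$k'$l)) = a k'"
proof -
  have "(\<Sum>l\<in>UNIV. (\<Sum>k\<in>UNIV. a k * u$k$l) * cnj (u$k'$l))
      = (\<Sum>l\<in>UNIV. \<Sum>k\<in>UNIV. a k * (u$k$l * cnj (u$k'$l)))"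
    by (simp add: sum_distrib_right mult.assoc)
  also have "\<dots> = (\<Sum>k\<in>UNIV. a k * (\<Sum>l\<in>UNIV. u$k$l * cnj (u$k'$l)))"
    by (subst sum.swap) (simp add: sum_distrib_left)
  also have "\<dots> = (\<Sum>k\<in>UNIV. a k * (if k = k' then 1 else 0))"
    using assms unfolding unitary_mat_def by simp
  also have "\<dots> = a k'"
    by (simp add: if_distrib cong: if_cong)
  finally show ?thesis .
qed

lemma unitary_mat_column_sum:
  assumes "unitary_mat u"
  shows "(\<Sum>k\<in>UNIV. (\<Sum>l\<in>UNIV. a l * cnj (u$k$l)) * u$k$l') = a l'"
proof -
  have "(\<Sum>k\<in>UNIV. (\<Sum>l\<in>UNIV. a l * cnj (u$k$l)) * u$k$l')
      = (\<Sum>k\<in>UNIV. \<Sum>l\<in>UNIV. a l * (cnj (u$k$l) * u$k$l'))"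
    by (simp add: sum_distrib_right mult.assoc)
  also have "\<dots> = (\<Sum>l\<in>UNIV. a l * (\<Sum>k\<in>UNIV. cnj (u$k$l) * u$k$l'))"
    by (subst sum.swap) (simp add: sum_distrib_left)
  also have "\<dots> = (\<Sum>l\<in>UNIV. a l * (if l = l' then 1 else 0))"
    using assms unfolding unitary_mat_def by simp
  also have "\<dots> = a l'"
    by (simp add: if_distrib cong: if_cong)
  finally show ?thesis .
qed

lemma unitary_mat_mult_right_cancel:
  assumes "unitary_mat u" and "\<And>l. (\<Sum>k\<in>UNIV. a k * u$k$l) = (\<Sum>k\<in>UNIV. b k * u$k$l)"
  shows "a = b"
proof
  fix k'
  show "a k' = b k'"
    using unitary_mat_row_sum[OF assms(1), of a k'] unitary_mat_row_sum[OF assms(1), of b k'] assms(2)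
    by simp
qed

lemma berezin_entry_mult:
  assumes "\<forall>k l. u$k$l \<noteq> 0"
  shows "berezin u f $k$l * u$k$l = (\<Sum>k'\<in>UNIV. berezin_D u f k k' * u$k'$l)"
proof -
  have "(u$k$l' * u$k'$l) / (u$k$l * u$k'$l') * f$k'$l' * complex_of_real ((cmod (u$k'$l'))\<^sup>2) * u$k$l
      = u$k$l' * f$k'$l' * cnj (u$k'$l') * u$k'$l" for k' l'
    unfolding complex_norm_square using assms by (simp add: field_simps)
  then show ?thesis
    by (simp add: berezin_def berezin_D_def sum_distrib_right)
qed

lemma entry_mult_eq_berezin_C:
  assumes "unitary_mat u"
  shows "f$k$l * u$k$l = (\<Sum>k'\<in>UNIV. berezin_C u f k k' * u$k'$l)"
  using unitary_mat_column_sum[OF assms, of "\<lambda>l. u$k$l * f$k$l" l]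
  by (simp add: berezin_C_def mult.assoc mult.commute)

lemma berezin_fixed_iff:
  assumes "unitary_mat u" and "\<forall>k l. u$k$l \<noteq> 0"
  shows "berezin u f = f \<longleftrightarrow> berezin_C u f = berezin_D u f"
proof
  assume fixed: "berezin u f = f"
  have "(\<Sum>k'\<in>UNIV. berezin_C u f k k' * u$k'$l) = (\<Sum>k'\<in>UNIV. berezin_D u f k k' * u$k'$l)" for k l
    using berezin_entry_mult[OF assms(2), of f k l] entry_mult_eq_berezin_C[OF assms(1), of f k l]
    by (simp add: fixed)
  then have "berezin_C u f k = berezin_D u f k" for k
    by (rule unitary_mat_mult_right_cancel[OF assms(1)])
  then show "berezin_C u f = berezin_D u f" ..
next
  assume "berezin_C u f = berezin_D u f"
  then have "berezin u f $k$l * u$k$l = f$k$l * u$k$l" for k l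
    using berezin_entry_mult[OF assms(2), of f k l] entry_mult_eq_berezin_C[OF assms(1), of f k l]
    by simp
  then show "berezin u f = f"
    using assms(2) by (simp add: vec_eq_iff)
qed

lemma berezin_C_eq_D_cconj:
  assumes "berezin_C u f = berezin_D u f"
  shows "berezin_C u (cconj f) = berezin_D u (cconj f)"
proof -
  have "berezin_C u (cconj f) k k' = cnj (berezin_D u f k' k)"
    "berezin_D u (cconj f) k k' = cnj (berezin_C u f k' k)" for k k'
    by (simp_all add: berezin_C_def berezin_D_def cconj_def mult_ac)
  with assms show ?thesis by (simp add: fun_eq_iff)
qed

lemma subspace_berezin_C_eq_D: "module.subspace cscale {f. berezin_C u f = berezin_D u f}"
proof -
  interpret cv: vector_space "cscale :: complex \<Rightarrow> complex ^ 'l ^ 'k \<Rightarrow> _"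
    by (rule vector_space_cscale)
  have "berezin_C u (f + g) k k' = berezin_C u f k k' + berezin_C u g k k'"
    "berezin_D u (f + g) k k' = berezin_D u f k k' + berezin_D u g k k'" for f g k k'
    by (simp_all add: berezin_C_def berezin_D_def distrib_left distrib_right sum.distrib)
  moreover have "berezin_C u (cscale c f) k k' = c * berezin_C u f k k'"
    "berezin_D u (cscale c f) k k' = c * berezin_D u f k k'" for f c k k'
    by (simp_all add: berezin_C_def berezin_D_def cscale_def sum_distrib_left mult_ac)
  moreover have "berezin_C u 0 = berezin_D u 0"
    by (simp add: berezin_C_def berezin_D_def fun_eq_iff)
  ultimately show ?thesis
    unfolding cv.subspace_def by (auto simp: fun_eq_iff)
qed

lemma vec_lambda_eq_sum_axis:
  "(\<chi> k l. c k l) = (\<Sum>k\<in>UNIV. \<Sum>l\<in>UNIV. c k l *\<^sub>R axis k (axis l (1::real)))"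
proof -
  have "(\<Sum>k\<in>UNIV. \<Sum>l\<in>UNIV. c k l *\<^sub>R axis k (axis l (1::real))) $ a $ b = c a b" for a b
  proof -
    have "(\<Sum>k\<in>UNIV. \<Sum>l\<in>UNIV. c k l *\<^sub>R axis k (axis l (1::real))) $ a $ b
       = (\<Sum>k\<in>UNIV. if k = a then (\<Sum>l\<in>UNIV. if l = b then c k l else 0) else 0)"
      unfolding sum_component
      by (intro sum.cong refl) (auto simp: axis_def if_distrib[of "\<lambda>y. c _ _ * y"] cong: if_cong)
    then show ?thesis by simp
  qed
  then show ?thesis by (simp add: vec_eq_iff)
qed

lemma has_derivative_vec_nth_nth:
  "((\<lambda>x::'a::real_normed_vector ^ 'l ^ 'k. x$k$l) has_derivative (\<lambda>h. h$k$l)) F"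
  by (intro bounded_linear_imp_has_derivative bounded_linear_compose[OF bounded_linear_vec_nth bounded_linear_vec_nth])

lemma mu_has_derivative:
  "(mu has_derivative (\<lambda>h. \<chi> k l. 2 * (u$k$l \<bullet> h$k$l))) (at u)"
proof -
  have "((\<lambda>x. (cmod (x$k$l))\<^sup>2) has_derivative (\<lambda>h. 2 * (u$k$l \<bullet> h$k$l))) (at u)" for k l
    using has_derivative_inner[OF has_derivative_vec_nth_nth has_derivative_vec_nth_nth, of k l k l u]
    by (simp add: power2_norm_eq_inner inner_commute)
  then have "((\<lambda>x. \<Sum>k\<in>UNIV. \<Sum>l\<in>UNIV. (cmod (x$k$l))\<^sup>2 *\<^sub>R axis k (axis l (1::real)))
      has_derivative (\<lambda>h. \<Sum>k\<in>UNIV. \<Sum>l\<in>UNIV. (2 * (u$k$l \<bullet> h$k$l)) *\<^sub>R axis k (axis l 1))) (at u)"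
    by (intro has_derivative_sum has_derivative_scaleR_left)
  then show ?thesis
    unfolding mu_def vec_lambda_eq_sum_axis .
qed

lemma mu_derivative_eq_0_iff:
  "frechet_derivative mu (at u) X = 0 \<longleftrightarrow> (\<forall>k l. u$k$l \<bullet> X$k$l = 0)"
proof -
  have "frechet_derivative mu (at u) X = (\<chi> k l. 2 * (u$k$l \<bullet> X$k$l))"
    by (rule fun_cong[OF frechet_derivative_at[OF mu_has_derivative, symmetric]])
  then show ?thesis by (simp add: vec_eq_iff)
qed

lemma orthogonal_complex_iff:
  fixes z x :: complex
  assumes "z \<noteq> 0"
  shows "z \<bullet> x = 0 \<longleftrightarrow> (\<exists>r\<in>\<real>. x = \<i> * r * z)"
proof
  assume "z \<bullet> x = 0"
  define w where "w = x / z"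
  have "Re w = (z \<bullet> x) / (cmod z)\<^sup>2"
    unfolding w_def complex_div_cnj[of x z] Re_divide_of_real by (simp add: inner_complex_def)
  with \<open>z \<bullet> x = 0\<close> have "- \<i> * w \<in> \<real>"
    by (simp add: complex_is_Real_iff)
  moreover have "x = \<i> * (- \<i> * w) * z"
    using assms by (simp add: w_def)
  ultimately show "\<exists>r\<in>\<real>. x = \<i> * r * z" ..
next
  assume "\<exists>r\<in>\<real>. x = \<i> * r * z"
  then show "z \<bullet> x = 0"
    by (auto simp: inner_complex_def elim!: Reals_cases)
qed

lemma phase_variation_tangent_U_iff:
  assumes "\<forall>k l. f$k$l \<in> \<real>"
  shows "phase_variation u f \<in> tangent_U u \<longleftrightarrow> berezin_C u f = berezin_D u f"
proof -
  have "(\<Sum>l\<in>UNIV. phase_variation u f$k$l * cnj (u$k'$l) + u$k$l * cnj (phase_variation u f$k'$l))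
      = \<i> * (berezin_C u f k k' - berezin_D u f k k')" for k k'
  proof -
    have "cnj (f$k'$l) = f$k'$l" for l
      using assms by (simp add: Reals_cnj_iff)
    then show ?thesis
      unfolding berezin_C_def berezin_D_def sum_subtractf[symmetric] sum_distrib_left
      by (intro sum.cong refl) (simp add: phase_variation_def algebra_simps)
  qed
  then show ?thesis
    unfolding tangent_U_def by (simp add: fun_eq_iff)
qed

lemma kernel_mu_derivative_eq_phase_variations:
  assumes "\<forall>k l. u$k$l \<noteq> 0"
  shows "{X \<in> tangent_U u. frechet_derivative mu (at u) X = 0}
    = phase_variation u ` {f. berezin_C u f = berezin_D u f \<and> (\<forall>k l. f$k$l \<in> \<real>)}"
proof -
  have dmu: "frechet_derivative mu (at u) X = 0 \<longleftrightarrow> (\<exists>f. (\<forall>k l. f$k$l \<in> \<real>) \<and> X = phase_variation u f)"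
    for X
  proof
    assume "frechet_derivative mu (at u) X = 0"
    then have "\<forall>k l. \<exists>r\<in>\<real>. X$k$l = \<i> * r * u$k$l"
      using assms by (simp add: mu_derivative_eq_0_iff orthogonal_complex_iff)
    then obtain r where "\<forall>k l. r k l \<in> \<real> \<and> X$k$l = \<i> * r k l * u$k$l"
      by metis
    then show "\<exists>f. (\<forall>k l. f$k$l \<in> \<real>) \<and> X = phase_variation u f"
      by (intro exI[of _ "\<chi> k l. r k l"]) (simp add: phase_variation_def vec_eq_iff)
  next
    assume "\<exists>f. (\<forall>k l. f$k$l \<in> \<real>) \<and> X = phase_variation u f"
    then show "frechet_derivative mu (at u) X = 0"
      using assms by (auto simp: mu_derivative_eq_0_iff orthogonal_complex_iff phase_variation_def)
  qed
  show ?thesis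
    by (auto simp: dmu phase_variation_tangent_U_iff)
qed

lemma dim_kernel_mu_derivative:
  assumes "\<forall>k l. u$k$l \<noteq> 0"
  shows "dim {X \<in> tangent_U u. frechet_derivative mu (at u) X = 0}
    = dim {f. berezin_C u f = berezin_D u f \<and> (\<forall>k l. f$k$l \<in> \<real>)}"
proof -
  have lin: "linear (phase_variation u)"
    by (rule linearI) (simp_all add: phase_variation_def vec_eq_iff algebra_simps scaleR_conv_of_real)
  have inj: "inj (phase_variation u)"
    using assms by (auto simp: inj_def phase_variation_def vec_eq_iff)
  show ?thesis
    unfolding kernel_mu_derivative_eq_phase_variations[OF assms]
    by (rule dim_image_eq[OF lin inj_on_subset[OF inj subset_UNIV]])
qed

theorem theorem5p1:
  fixes u :: "complex ^ 'l ^ 'k"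
  assumes "CARD('k) = CARD('l)"
    and "u \<in> U0"
  shows "dim {X \<in> tangent_U u. frechet_derivative mu (at u) X = 0} = mult_one u"
proof -
  have U: "unitary_mat u" and nz: "\<forall>k l. u$k$l \<noteq> 0"
    using assms(2) by (auto simp: U0_def)
  have "mult_one u = cdim {f. berezin_C u f = berezin_D u f}"
    by (simp add: mult_one_def berezin_fixed_iff[OF U nz])
  also have "\<dots> = dim {f \<in> {f. berezin_C u f = berezin_D u f}. \<forall>k l. f$k$l \<in> \<real>}"
    by (rule cdim_eq_dim_real_points[OF subspace_berezin_C_eq_D]) (simp add: berezin_C_eq_D_cconj)
  also have "\<dots> = dim {X \<in> tangent_U u. frechet_derivative mu (at u) X = 0}"
    by (simp add: dim_kernel_mu_derivative[OF nz])
  finally show ?thesis ..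
qed

end
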